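(* (1) For every $n$, there exists $N$ such that every graph on at least $N$ vertices has a vertex-minor isomorphic to the edgeless graph $\overline{K_n}$ on $n$ vertices. (2) For every $n$, there exists $N$ such that every connected graph having at least $N$ vertices has a vertex-minor isomorphic to $K_n$. (3) For every $n$, there exists $N$ such that every graph having at least $N$ edges has a vertex-minor isomorphic to $K_n$ or to the graph obtained from two disjoint copies of the edgeless graph $\overline{K_n}$ by adding a perfect matching between them (i.e., a perfect matching with $n$ edges, $nK_2$).
   Context: All graphs are simple. A graph $H$ is a vertex-minor of $G$ if $H$ is an induced subgraph of a graph obtained from $G$ by a sequence of local complementations (local complementation at $v$ replaces the subgraph induced on the neighborhood of $v$ by its complement). *)

theory Defs
  imports Main
begin

definition simple_graph :: "'a set \<Rightarrow> ('a \<Rightarrow> 'a \<Rightarrow> bool) \<Rightarrow> bool" where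
  "simple_graph V E \<longleftrightarrow> finite V \<and> (\<forall>x y. E x y \<longrightarrow> x \<in> V \<and> y \<in> V)
     \<and> (\<forall>x y. E x y \<longrightarrow> E y x) \<and> (\<forall>x. \<not> E x x)"

definition local_comp :: "('a \<Rightarrow> 'a \<Rightarrow> bool) \<Rightarrow> 'a \<Rightarrow> ('a \<Rightarrow> 'a \<Rightarrow> bool)" where
  "local_comp E v = (\<lambda>x y. if E v x \<and> E v y \<and> x \<noteq> y then \<not> E x y else E x y)"

inductive lc_reach :: "'a set \<Rightarrow> ('a \<Rightarrow> 'a \<Rightarrow> bool) \<Rightarrow> ('a \<Rightarrow> 'a \<Rightarrow> bool) \<Rightarrow> bool"
  for V where
  lc_refl: "lc_reach V E E"
| lc_step: "lc_reach V E E' \<Longrightarrow> v \<in> V \<Longrightarrow> lc_reach V E (local_comp E' v)"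

definition vertex_minor :: "'a set \<Rightarrow> ('a \<Rightarrow> 'a \<Rightarrow> bool) \<Rightarrow> 'a set \<Rightarrow> ('a \<Rightarrow> 'a \<Rightarrow> bool) \<Rightarrow> bool" where
  "vertex_minor W F V E \<longleftrightarrow> W \<subseteq> V \<and>
     (\<exists>E'. lc_reach V E E' \<and> (\<forall>x y. F x y \<longleftrightarrow> x \<in> W \<and> y \<in> W \<and> E' x y))"

definition graph_iso :: "'a set \<Rightarrow> ('a \<Rightarrow> 'a \<Rightarrow> bool) \<Rightarrow> 'b set \<Rightarrow> ('b \<Rightarrow> 'b \<Rightarrow> bool) \<Rightarrow> bool" where
  "graph_iso V E W F \<longleftrightarrow> (\<exists>f. bij_betw f V W \<and> (\<forall>x\<in>V. \<forall>y\<in>V. E x y \<longleftrightarrow> F (f x) (f y)))"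

definition has_vm_iso :: "'a set \<Rightarrow> ('a \<Rightarrow> 'a \<Rightarrow> bool) \<Rightarrow> 'b set \<Rightarrow> ('b \<Rightarrow> 'b \<Rightarrow> bool) \<Rightarrow> bool" where
  "has_vm_iso V E W0 F0 \<longleftrightarrow> (\<exists>W F. vertex_minor W F V E \<and> graph_iso W F W0 F0)"

definition graph_connected :: "'a set \<Rightarrow> ('a \<Rightarrow> 'a \<Rightarrow> bool) \<Rightarrow> bool" where
  "graph_connected V E \<longleftrightarrow> (\<forall>x\<in>V. \<forall>y\<in>V. (x, y) \<in> {(a, b). E a b}\<^sup>*)"

definition edges :: "('a \<Rightarrow> 'a \<Rightarrow> bool) \<Rightarrow> 'a set set" where
  "edges E = {{x, y} | x y. E x y}"

definition edgeless_verts :: "nat \<Rightarrow> nat set" where "edgeless_verts n = {0..<n}"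
definition edgeless_adj :: "nat \<Rightarrow> nat \<Rightarrow> bool" where "edgeless_adj x y = False"
definition complete_adj :: "nat \<Rightarrow> nat \<Rightarrow> nat \<Rightarrow> bool" where
  "complete_adj n x y \<longleftrightarrow> x < n \<and> y < n \<and> x \<noteq> y"
definition matching_verts :: "nat \<Rightarrow> nat set" where "matching_verts n = {0..<2*n}"
definition matching_adj :: "nat \<Rightarrow> nat \<Rightarrow> nat \<Rightarrow> bool" where
  "matching_adj n x y \<longleftrightarrow> x < 2*n \<and> y < 2*n \<and> (x = y + n \<or> y = x + n)"

end

theory Submission
  imports Defs
begin

text \<open>Everything rests on one observation: if local complementations produce a vertex c of
  degree at least 4^n, Ramsey's theorem gives n neighbours of c that are pairwise adjacent or
  pairwise non-adjacent, and in the latter case local complementation at c makes them pairwise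
  adjacent, so K_n is a vertex-minor.

  (1) Ramsey in the whole graph gives n independent vertices or n+1 pairwise adjacent ones, and
  complementing at one vertex of the clique makes the remaining n independent.
  (2) If all degrees are below 4^n, balls around a vertex grow at most geometrically, so a large
  connected graph has a long geodesic, i.e. a long induced path p_0 ... p_m; complementing
  successively at p_1, ..., p_(m-1) makes p_m adjacent to all of p_0, ..., p_(m-1).
  (3) If all degrees are below 4^n, many edges force a large induced matching, which is an
  induced copy of nK_2.\<close>

lemma simple_graph_local_comp:
  assumes "simple_graph V E"
  shows "simple_graph V (local_comp E v)"
  using assms unfolding simple_graph_def local_comp_def by metis

lemma simple_graph_lc_reach:
  assumes "lc_reach V E E'" "simple_graph V E"
  shows "simple_graph V E'"
  using assms by induction (auto intro: simple_graph_local_comp)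

lemma simple_graph_nbhd_subset:
  assumes "simple_graph V E"
  shows "{y. E x y} \<subseteq> V"
  using assms unfolding simple_graph_def by blast

lemma finite_nbhd:
  assumes "simple_graph V E"
  shows "finite {y. E x y}"
  using assms simple_graph_nbhd_subset finite_subset unfolding simple_graph_def by metis

lemma has_vm_isoI:
  assumes "lc_reach V E E'" "inj_on g A" "g ` A \<subseteq> V"
    and "\<forall>i\<in>A. \<forall>j\<in>A. E' (g i) (g j) \<longleftrightarrow> G i j"
  shows "has_vm_iso V E A G"
proof -
  let ?W = "g ` A" and ?h = "the_inv_into A g"
  let ?F = "\<lambda>x y. x \<in> ?W \<and> y \<in> ?W \<and> E' x y"
  have "vertex_minor ?W ?F V E"
    using assms(1,3) unfolding vertex_minor_def by blast
  moreover have "bij_betw ?h ?W A"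
    using assms(2) by (simp add: bij_betw_the_inv_into inj_on_imp_bij_betw)
  moreover have "\<forall>x\<in>?W. \<forall>y\<in>?W. ?F x y \<longleftrightarrow> G (?h x) (?h y)"
    using assms(2,4) by (auto simp: the_inv_into_f_f)
  ultimately show ?thesis
    unfolding has_vm_iso_def graph_iso_def by blast
qed

definition homogeneous :: "('a \<Rightarrow> 'a \<Rightarrow> bool) \<Rightarrow> bool \<Rightarrow> 'a set \<Rightarrow> bool" where
  "homogeneous E b S \<longleftrightarrow> (\<forall>x\<in>S. \<forall>y\<in>S. x \<noteq> y \<longrightarrow> E x y = b)"

lemma homogeneous_empty [simp]: "homogeneous E b {}"
  by (simp add: homogeneous_def)

lemma homogeneous_subset: "homogeneous E b S \<Longrightarrow> T \<subseteq> S \<Longrightarrow> homogeneous E b T"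
  unfolding homogeneous_def by blast

lemma homogeneous_insert:
  "homogeneous E b (insert v S) \<longleftrightarrow>
     homogeneous E b S \<and> (\<forall>y\<in>S. y \<noteq> v \<longrightarrow> E v y = b \<and> E y v = b)"
  unfolding homogeneous_def by auto

lemma homogeneous_local_comp:
  assumes "S \<subseteq> {y. E c y}"
  shows "homogeneous (local_comp E c) b S \<longleftrightarrow> homogeneous E (\<not> b) S"
  using assms unfolding homogeneous_def local_comp_def by auto

lemma ramsey_two_colours:
  fixes E :: "'a \<Rightarrow> 'a \<Rightarrow> bool" and f :: "bool \<Rightarrow> nat"
  assumes sym: "\<forall>x y. E x y \<longrightarrow> E y x"
    and "finite V" "2 ^ (f False + f True) \<le> card V"
  shows "\<exists>b S. S \<subseteq> V \<and> card S = f b \<and> homogeneous E b S"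
  using assms(2,3)
proof (induction "f False + f True" arbitrary: f V)
  case 0
  then show ?case
    by (intro exI[of _ False] exI[of _ "{}"]) simp
next
  case (Suc s)
  show ?case
  proof (cases "\<exists>b. f b = 0")
    case True
    then show ?thesis
      by (metis card.empty empty_subsetI homogeneous_empty)
  next
    case False
    have "(0::nat) < 2 ^ (f False + f True)" by simp
    then have "V \<noteq> {}" using Suc.prems by fastforce
    then obtain v where v: "v \<in> V" by blast
    define N where "N b = {y \<in> V - {v}. E v y = b}" for b
    have fin_N: "finite (N c)" for c
      using Suc.prems(1) unfolding N_def by auto
    have "N False \<union> N True = V - {v}" "N False \<inter> N True = {}"
      unfolding N_def by auto
    then have "card (N False) + card (N True) = card V - 1"
      using card_Un_disjoint[OF fin_N fin_N, of False True] card_Diff_singleton[OF v] by simp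
    moreover have "(2::nat) ^ (f False + f True) = 2 ^ s + 2 ^ s"
      using Suc.hyps(2) by (metis mult_2 power_Suc)
    moreover have "(0::nat) < 2 ^ s" by simp
    ultimately have "2 ^ s \<le> card (N False) \<or> 2 ^ s \<le> card (N True)"
      using Suc.prems(2) by linarith
    then obtain b where b: "2 ^ s \<le> card (N b)" by blast
    define g where "g = f(b := f b - 1)"
    have "0 < f False" "0 < f True"
      using False by auto
    then have "s = g False + g True"
      using Suc.hyps(2) unfolding g_def by (cases b) auto
    then obtain c S where S: "S \<subseteq> N b" "card S = g c" "homogeneous E c S"
      using Suc.hyps(1)[OF _ fin_N] b by blast
    show ?thesis
    proof (cases "c = b")
      case True
      have "v \<notin> S" "finite S"
        using S(1) finite_subset[OF S(1) fin_N] unfolding N_def by auto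
      moreover have "0 < f b"
        using False by auto
      ultimately have "card (insert v S) = f b"
        using S(2) True unfolding g_def by simp
      moreover have "homogeneous E b (insert v S)"
        using S sym True unfolding homogeneous_insert N_def by blast
      moreover have "insert v S \<subseteq> V"
        using S(1) v unfolding N_def by blast
      ultimately show ?thesis by blast
    next
      case False
      then have "card S = f c"
        using S(2) unfolding g_def by simp
      moreover have "S \<subseteq> V"
        using S(1) unfolding N_def by blast
      ultimately show ?thesis
        using S(3) by blast
    qed
  qed
qed

lemma has_vm_iso_homogeneous:
  assumes "lc_reach V E E'" "\<forall>x. \<not> E' x x" "S \<subseteq> V" "finite S" "homogeneous E' b S"
    and "finite A" "card A = card S" "\<forall>i\<in>A. \<forall>j\<in>A. G i j \<longleftrightarrow> i \<noteq> j \<and> b"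
  shows "has_vm_iso V E A G"
proof -
  obtain h where "bij_betw h A S"
    using finite_same_card_bij[OF assms(6,4,7)] by blast
  then have inj: "inj_on h A" and im: "h ` A = S"
    by (auto simp: bij_betw_def)
  show ?thesis
  proof (rule has_vm_isoI[OF assms(1) inj])
    show "h ` A \<subseteq> V"
      using im assms(3) by simp
    show "\<forall>i\<in>A. \<forall>j\<in>A. E' (h i) (h j) \<longleftrightarrow> G i j"
    proof (intro ballI)
      fix i j assume ij: "i \<in> A" "j \<in> A"
      then have "h i \<in> S" "h j \<in> S" "h i = h j \<longleftrightarrow> i = j"
        using im inj by (auto simp: inj_on_eq_iff)
      then show "E' (h i) (h j) \<longleftrightarrow> G i j"
        using assms(2,5,8) ij unfolding homogeneous_def by (cases "i = j") simp_all
    qed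
  qed
qed

lemma has_vm_complete_if_large_nbhd:
  assumes sg: "simple_graph V E" and "lc_reach V E E'" "c \<in> V" "2 ^ (n + n) \<le> card {y. E' c y}"
  shows "has_vm_iso V E {0..<n} (complete_adj n)"
proof -
  have sg': "simple_graph V E'"
    using simple_graph_lc_reach assms(2) sg .
  then have sym: "\<forall>x y. E' x y \<longrightarrow> E' y x"
    unfolding simple_graph_def by blast
  obtain b S where S: "S \<subseteq> {y. E' c y}" "card S = n" "homogeneous E' b S"
    using ramsey_two_colours[OF sym finite_nbhd[OF sg', of c], of "\<lambda>_. n"] assms(4) by auto
  have "\<exists>F. lc_reach V E F \<and> simple_graph V F \<and> homogeneous F True S"
  proof (cases b)
    case True
    then show ?thesis
      using S(3) assms(2) sg' by (intro exI[of _ E']) simp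
  next
    case False
    then have "homogeneous (local_comp E' c) True S"
      using homogeneous_local_comp[of S E' c True] S by simp
    then show ?thesis
      using lc_step[OF assms(2,3)] simple_graph_local_comp[OF sg']
      by (intro exI[of _ "local_comp E' c"]) simp
  qed
  then obtain F where F: "lc_reach V E F" "simple_graph V F" "homogeneous F True S"
    by blast
  have "S \<subseteq> V"
    using S(1) simple_graph_nbhd_subset[OF sg'] by blast
  moreover have "finite S"
    using finite_subset[OF S(1) finite_nbhd[OF sg']] .
  moreover have "\<forall>x. \<not> F x x"
    using F(2) unfolding simple_graph_def by blast
  ultimately show ?thesis
    by (intro has_vm_iso_homogeneous[OF F(1) _ _ _ F(3)]) (simp_all add: S(2) complete_adj_def)
qed

lemma has_vm_edgeless_if_large:
  assumes sg: "simple_graph V E" and "2 ^ (n + Suc n) \<le> card V"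
  shows "has_vm_iso V E (edgeless_verts n) edgeless_adj"
proof -
  have sym: "\<forall>x y. E x y \<longrightarrow> E y x" and "finite V"
    using sg unfolding simple_graph_def by blast+
  obtain b S where S: "S \<subseteq> V" "card S = (if b then Suc n else n)" "homogeneous E b S"
    using ramsey_two_colours[OF sym \<open>finite V\<close>, of "\<lambda>b. if b then Suc n else n"] assms(2)
    by auto
  have "\<exists>F T. lc_reach V E F \<and> simple_graph V F \<and> T \<subseteq> V \<and> card T = n \<and> homogeneous F False T"
  proof (cases b)
    case False
    then have "card S = n" "homogeneous E False S"
      using S(2,3) by simp_all
    then show ?thesis
      using S(1) sg lc_refl by (intro exI[of _ E] exI[of _ S]) simp
  next
    case True
    then have "S \<noteq> {}"
      using S(2) by auto
    then obtain v where v: "v \<in> S"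
      by blast
    have "S - {v} \<subseteq> {y. E v y}"
      using S(3) v True unfolding homogeneous_def by auto
    moreover have "homogeneous E True (S - {v})"
      using homogeneous_subset[OF S(3), of "S - {v}"] True by simp
    ultimately have "homogeneous (local_comp E v) False (S - {v})"
      using homogeneous_local_comp[of "S - {v}" E v False] by simp
    moreover have "card (S - {v}) = n"
      using S(2) True v by (simp add: card_Diff_singleton)
    moreover have "lc_reach V E (local_comp E v)"
      using lc_step[OF lc_refl, of v V E] v S(1) by blast
    moreover have "S - {v} \<subseteq> V"
      using S(1) by blast
    ultimately show ?thesis
      using simple_graph_local_comp[OF sg] by (intro exI[of _ "local_comp E v"] exI[of _ "S - {v}"]) simp
  qed
  then obtain F T where F: "lc_reach V E F" "simple_graph V F" "T \<subseteq> V" "card T = n"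
    "homogeneous F False T"
    by blast
  have "finite T"
    using finite_subset[OF F(3) \<open>finite V\<close>] .
  moreover have "\<forall>x. \<not> F x x"
    using F(2) unfolding simple_graph_def by blast
  ultimately show ?thesis
    unfolding edgeless_verts_def edgeless_adj_def
    by (intro has_vm_iso_homogeneous[OF F(1) _ F(3) _ F(5)]) (simp_all add: F(4))
qed

lemma low_degree_or_has_vm_complete:
  assumes sg: "simple_graph V E"
  shows "(\<forall>x. card {y. E x y} < 2 ^ (n + n)) \<or> has_vm_iso V E {0..<n} (complete_adj n)"
proof (cases "\<forall>x. card {y. E x y} < 2 ^ (n + n)")
  case False
  then obtain c where c: "2 ^ (n + n) \<le> card {y. E c y}"
    by (meson not_less)
  then have "0 < card {y. E c y}"
    by (rule less_le_trans[rotated]) simp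
  then obtain y where "E c y"
    by (auto simp: card_gt_0_iff)
  then have "c \<in> V"
    using sg unfolding simple_graph_def by blast
  then show ?thesis
    using has_vm_complete_if_large_nbhd[OF sg lc_refl _ c] by blast
qed simp

fun ball :: "('a \<Rightarrow> 'a \<Rightarrow> bool) \<Rightarrow> 'a \<Rightarrow> nat \<Rightarrow> 'a set" where
  "ball E v 0 = {v}"
| "ball E v (Suc k) = ball E v k \<union> {y. \<exists>x\<in>ball E v k. E x y}"

lemma ball_mono: "i \<le> j \<Longrightarrow> ball E v i \<subseteq> ball E v j"
  by (induction j) (auto simp: le_Suc_eq)

lemma ball_subset: "simple_graph V E \<Longrightarrow> v \<in> V \<Longrightarrow> ball E v k \<subseteq> V"
  by (induction k) (auto simp: simple_graph_def)

lemma card_ball_le: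
  assumes sg: "simple_graph V E" and "v \<in> V" and deg: "\<forall>x. card {y. E x y} \<le> D"
  shows "card (ball E v k) \<le> Suc D ^ k"
proof (induction k)
  case 0
  then show ?case by simp
next
  case (Suc k)
  let ?B = "ball E v k"
  have "finite V"
    using sg by (simp add: simple_graph_def)
  then have fin: "finite ?B"
    using finite_subset[OF ball_subset[OF assms(1,2)]] by blast
  have "card (\<Union>x\<in>?B. {y. E x y}) \<le> (\<Sum>x\<in>?B. card {y. E x y})"
    using card_UN_le[OF fin] .
  also have "\<dots> \<le> (\<Sum>x\<in>?B. D)"
    by (rule sum_mono) (use deg in blast)
  finally have "card (\<Union>x\<in>?B. {y. E x y}) \<le> card ?B * D"
    by simp
  moreover have "ball E v (Suc k) = ?B \<union> (\<Union>x\<in>?B. {y. E x y})"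
    by auto
  ultimately have "card (ball E v (Suc k)) \<le> card ?B * Suc D"
    using card_Un_le[of ?B "\<Union>x\<in>?B. {y. E x y}"] by simp
  also have "\<dots> \<le> Suc D ^ k * Suc D"
    using Suc.IH by (rule mult_right_mono) simp
  finally show ?case
    by (simp add: mult.commute)
qed

lemma ball_stable: "ball E v (Suc k) = ball E v k \<Longrightarrow> ball E v (k + j) = ball E v k"
  by (induction j) auto

lemma in_ball_if_rtrancl: "(v, y) \<in> {(a, b). E a b}\<^sup>* \<Longrightarrow> \<exists>k. y \<in> ball E v k"
proof (induction rule: rtrancl_induct)
  case base
  show ?case
    by (intro exI[of _ 0]) simp
next
  case (step y z)
  then obtain k where "y \<in> ball E v k"
    by blast
  then show ?case
    using step by (intro exI[of _ "Suc k"]) auto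
qed

lemma connected_subset_ball_stable:
  assumes "graph_connected V E" "v \<in> V" "ball E v (Suc k) = ball E v k"
  shows "V \<subseteq> ball E v k"
proof
  fix y assume "y \<in> V"
  then have "(v, y) \<in> {(a, b). E a b}\<^sup>*"
    using assms(1,2) unfolding graph_connected_def by blast
  then obtain j where "y \<in> ball E v j"
    using in_ball_if_rtrancl[of v y E] by blast
  moreover have "ball E v j \<subseteq> ball E v (k + j)"
    by (rule ball_mono) simp
  ultimately show "y \<in> ball E v k"
    using ball_stable[OF assms(3), of j] by blast
qed

definition geodesic :: "('a \<Rightarrow> 'a \<Rightarrow> bool) \<Rightarrow> 'a \<Rightarrow> (nat \<Rightarrow> 'a) \<Rightarrow> nat \<Rightarrow> bool" where
  "geodesic E v p K \<longleftrightarrow> (\<forall>i\<le>K. p i \<in> ball E v i \<and> (\<forall>j<i. p i \<notin> ball E v j))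
     \<and> (\<forall>i<K. E (p i) (p (Suc i)))"

lemma geodesic_exists:
  "y \<in> ball E v k \<Longrightarrow> \<forall>i<k. y \<notin> ball E v i \<Longrightarrow> \<exists>p. p k = y \<and> geodesic E v p k"
proof (induction k arbitrary: y)
  case 0
  then show ?case
    unfolding geodesic_def by (intro exI[of _ "\<lambda>_. y"]) auto
next
  case (Suc k)
  then have "y \<notin> ball E v k"
    by blast
  then obtain x where x: "x \<in> ball E v k" "E x y"
    using Suc.prems(1) by auto
  have "x \<notin> ball E v i" if "i < k" for i
  proof
    assume "x \<in> ball E v i"
    then have "y \<in> ball E v (Suc i)"
      using x(2) by auto
    then show False
      using ball_mono[of "Suc i" k E v] that \<open>y \<notin> ball E v k\<close> by auto
  qed
  then obtain p where p: "p k = x" "geodesic E v p k"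
    using Suc.IH[OF x(1)] by blast
  have "geodesic E v (p(Suc k := y)) (Suc k)"
    using p x(2) Suc.prems unfolding geodesic_def by (auto simp: le_Suc_eq less_Suc_eq)
  then show ?case
    by (meson fun_upd_same)
qed

definition induced_path :: "('a \<Rightarrow> 'a \<Rightarrow> bool) \<Rightarrow> (nat \<Rightarrow> 'a) \<Rightarrow> nat \<Rightarrow> bool" where
  "induced_path E p K \<longleftrightarrow> inj_on p {..K} \<and>
     (\<forall>i\<le>K. \<forall>j\<le>K. E (p i) (p j) \<longleftrightarrow> j = Suc i \<or> i = Suc j)"

lemma geodesic_induced_path:
  assumes sg: "simple_graph V E" and geo: "geodesic E v p K"
  shows "induced_path E p K"
proof -
  have sym: "\<forall>x y. E x y \<longrightarrow> E y x" and irr: "\<forall>x. \<not> E x x"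
    using sg unfolding simple_graph_def by blast+
  have in_ball: "p i \<in> ball E v i" and out_ball: "p j \<notin> ball E v i"
    if "i < j" "j \<le> K" for i j
    using geo that unfolding geodesic_def by auto
  have short: "j \<le> Suc i" if "E (p i) (p j)" "i \<le> K" "j \<le> K" for i j
  proof (rule ccontr)
    assume "\<not> j \<le> Suc i"
    then have "p j \<in> ball E v (Suc i)"
      using in_ball[of i j] that by auto
    then show False
      using out_ball[of "Suc i" j] \<open>\<not> j \<le> Suc i\<close> that(3) by simp
  qed
  have "E (p i) (p j) \<longleftrightarrow> j = Suc i \<or> i = Suc j" if "i \<le> K" "j \<le> K" for i j
  proof
    assume "E (p i) (p j)"
    then have "j \<le> Suc i" "i \<le> Suc j" "i \<noteq> j"
      using short[of i j] short[of j i] sym irr that by auto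
    then show "j = Suc i \<or> i = Suc j"
      by (metis \<open>E (p i) (p j)\<close> irr le_SucE le_antisym nat_neq_iff)
  next
    assume "j = Suc i \<or> i = Suc j"
    then show "E (p i) (p j)"
      using geo sym that unfolding geodesic_def by auto
  qed
  moreover have "inj_on p {..K}"
  proof (rule linorder_inj_onI)
    fix i j assume "i < j" "i \<in> {..K}" "j \<in> {..K}"
    then show "p i \<noteq> p j"
      using in_ball out_ball by fastforce
  qed auto
  ultimately show ?thesis
    unfolding induced_path_def by blast
qed

lemma long_induced_path:
  assumes sg: "simple_graph V E" and con: "graph_connected V E"
    and deg: "\<forall>x. card {y. E x y} \<le> D" and large: "Suc D ^ K < card V"
  shows "\<exists>p. (\<forall>i\<le>Suc K. p i \<in> V) \<and> induced_path E p (Suc K)"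
proof -
  have "V \<noteq> {}"
    using large by auto
  then obtain v where v: "v \<in> V"
    by blast
  have "ball E v (Suc K) \<noteq> ball E v K"
  proof
    assume "ball E v (Suc K) = ball E v K"
    then have "card V \<le> card (ball E v K)"
      using connected_subset_ball_stable[OF con v] ball_subset[OF sg v] sg
      by (metis card_mono finite_subset simple_graph_def)
    then show False
      using card_ball_le[OF sg v deg, of K] large by simp
  qed
  then obtain y where y: "y \<in> ball E v (Suc K)" "y \<notin> ball E v K"
    using ball_mono[of K "Suc K" E v] by auto
  have "\<forall>i<Suc K. y \<notin> ball E v i"
    using y(2) ball_mono[of _ K E v] by (auto simp: less_Suc_eq_le)
  then obtain p where p: "geodesic E v p (Suc K)"
    using geodesic_exists[OF y(1)] by blast
  then have "\<forall>i\<le>Suc K. p i \<in> V"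
    using ball_subset[OF sg v] unfolding geodesic_def by blast
  then show ?thesis
    using geodesic_induced_path[OF sg p] by blast
qed

fun local_comp_path :: "('a \<Rightarrow> 'a \<Rightarrow> bool) \<Rightarrow> (nat \<Rightarrow> 'a) \<Rightarrow> nat \<Rightarrow> 'a \<Rightarrow> 'a \<Rightarrow> bool" where
  "local_comp_path E p 0 = E"
| "local_comp_path E p (Suc k) = local_comp (local_comp_path E p k) (p (Suc k))"

lemma lc_reach_local_comp_path: "\<forall>i\<le>k. p i \<in> V \<Longrightarrow> lc_reach V E (local_comp_path E p k)"
  by (induction k) (auto intro: lc_reach.intros)

text \<open>The neighbours of p (k+1) on the path are p 0, ..., p k and p (k+2), so complementing
  at p (k+1) joins p (k+2) to all of p 0, ..., p k and leaves the rest of the path untouched.\<close>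
lemma local_comp_fan_step:
  assumes irr: "\<forall>x. \<not> F x x" and inj: "inj_on p {..K}" and k: "Suc (Suc k) \<le> K"
    and fan: "\<forall>j\<le>k. F (p (Suc k)) (p j)"
    and path: "\<forall>i\<le>K. \<forall>j\<le>K. Suc (Suc k) \<le> max i j \<longrightarrow> (F (p i) (p j) \<longleftrightarrow> j = Suc i \<or> i = Suc j)"
  shows "\<forall>j\<le>Suc k. local_comp F (p (Suc k)) (p (Suc (Suc k))) (p j)"
    and "\<forall>i\<le>K. \<forall>j\<le>K. Suc (Suc (Suc k)) \<le> max i j \<longrightarrow>
      (local_comp F (p (Suc k)) (p i) (p j) \<longleftrightarrow> j = Suc i \<or> i = Suc j)"
proof -
  let ?c = "p (Suc k)"
  have c_next: "F ?c (p (Suc (Suc k)))" "F (p (Suc (Suc k))) ?c"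
    using path k by auto
  show "\<forall>j\<le>Suc k. local_comp F ?c (p (Suc (Suc k))) (p j)"
  proof (intro allI impI)
    fix j assume "j \<le> Suc k"
    then consider "j = Suc k" | "j \<le> k"
      by linarith
    then show "local_comp F ?c (p (Suc (Suc k))) (p j)"
    proof cases
      case 1
      then show ?thesis
        using c_next irr by (simp add: local_comp_def)
    next
      case 2
      then have "p (Suc (Suc k)) \<noteq> p j"
        using inj k by (auto simp: inj_on_eq_iff)
      moreover have "\<not> F (p (Suc (Suc k))) (p j)"
        using path k 2 by auto
      ultimately show ?thesis
        using c_next fan 2 by (simp add: local_comp_def)
    qed
  qed
  show "\<forall>i\<le>K. \<forall>j\<le>K. Suc (Suc (Suc k)) \<le> max i j \<longrightarrow>
      (local_comp F ?c (p i) (p j) \<longleftrightarrow> j = Suc i \<or> i = Suc j)"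
  proof (intro allI impI)
    fix i j assume ij: "i \<le> K" "j \<le> K" "Suc (Suc (Suc k)) \<le> max i j"
    have far: "\<not> F ?c (p l)" if "l \<le> K" "Suc (Suc (Suc k)) \<le> l" for l
      using path k that by auto
    have "\<not> F ?c (p i) \<or> \<not> F ?c (p j)"
      using far ij by (metis max_def)
    then have "local_comp F ?c (p i) (p j) = F (p i) (p j)"
      by (auto simp: local_comp_def)
    then show "local_comp F ?c (p i) (p j) \<longleftrightarrow> j = Suc i \<or> i = Suc j"
      using path ij by simp
  qed
qed

lemma local_comp_path_fan:
  assumes sg: "simple_graph V E" and "\<forall>i\<le>K. p i \<in> V" and path: "induced_path E p K"
  shows "Suc k \<le> K \<Longrightarrow> (\<forall>j\<le>k. local_comp_path E p k (p (Suc k)) (p j)) \<and>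
    (\<forall>i\<le>K. \<forall>j\<le>K. Suc (Suc k) \<le> max i j \<longrightarrow>
      (local_comp_path E p k (p i) (p j) \<longleftrightarrow> j = Suc i \<or> i = Suc j))"
proof (induction k)
  case 0
  then show ?case
    using path unfolding induced_path_def by auto
next
  case (Suc k)
  then obtain fan: "\<forall>j\<le>k. local_comp_path E p k (p (Suc k)) (p j)"
    and rest: "\<forall>i\<le>K. \<forall>j\<le>K. Suc (Suc k) \<le> max i j \<longrightarrow>
      (local_comp_path E p k (p i) (p j) \<longleftrightarrow> j = Suc i \<or> i = Suc j)"
    by simp
  have "lc_reach V E (local_comp_path E p k)"
    by (rule lc_reach_local_comp_path) (use assms(2) Suc.prems in auto)
  then have irr: "\<forall>x. \<not> local_comp_path E p k x x"
    using simple_graph_lc_reach[OF _ sg] unfolding simple_graph_def by blast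
  have inj: "inj_on p {..K}"
    using path unfolding induced_path_def by blast
  show ?case
    using local_comp_fan_step[OF irr inj Suc.prems fan rest] by simp
qed

lemma induced_path_lc_large_nbhd:
  assumes sg: "simple_graph V E" and inV: "\<forall>i\<le>Suc K. p i \<in> V"
    and path: "induced_path E p (Suc K)"
  shows "\<exists>E'. lc_reach V E E' \<and> Suc K \<le> card {y. E' (p (Suc K)) y}"
proof -
  let ?E' = "local_comp_path E p K"
  have reach: "lc_reach V E ?E'"
    by (rule lc_reach_local_comp_path) (use inV in auto)
  have "p ` {..K} \<subseteq> {y. ?E' (p (Suc K)) y}"
    using local_comp_path_fan[OF sg inV path, of K] by auto
  moreover have "inj_on p {..K}"
    using path inj_on_subset[of p "{..Suc K}" "{..K}"] unfolding induced_path_def by auto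
  then have "card (p ` {..K}) = Suc K"
    by (simp add: card_image)
  ultimately have "Suc K \<le> card {y. ?E' (p (Suc K)) y}"
    using card_mono[OF finite_nbhd[OF simple_graph_lc_reach[OF reach sg]]] by metis
  then show ?thesis
    using reach by blast
qed

lemma has_vm_complete_if_connected_large:
  assumes sg: "simple_graph V E" and con: "graph_connected V E"
    and large: "(2 ^ (n + n)) ^ 2 ^ (n + n) < card V"
  shows "has_vm_iso V E {0..<n} (complete_adj n)"
  using low_degree_or_has_vm_complete[OF sg, of n]
proof
  define R :: nat where "R = 2 ^ (n + n)"
  assume "\<forall>x. card {y. E x y} < 2 ^ (n + n)"
  then have "\<forall>x. card {y. E x y} \<le> R - 1"
    unfolding R_def by (simp add: less_eq_iff_succ_less)
  moreover have "Suc (R - 1) = R"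
    unfolding R_def by simp
  ultimately obtain p where p: "\<forall>i\<le>Suc R. p i \<in> V" "induced_path E p (Suc R)"
    using long_induced_path[OF sg con, of "R - 1" R] large unfolding R_def by auto
  then obtain E' where "lc_reach V E E'" "Suc R \<le> card {y. E' (p (Suc R)) y}"
    using induced_path_lc_large_nbhd[OF sg] by blast
  then show ?thesis
    using has_vm_complete_if_large_nbhd[OF sg _ _, of E' "p (Suc R)" n] p(1)
    unfolding R_def by simp
qed

lemma finite_edges:
  assumes "simple_graph V E"
  shows "finite (edges E)"
proof -
  have "edges E \<subseteq> (\<lambda>(u, w). {u, w}) ` (V \<times> V)"
    using assms unfolding edges_def simple_graph_def by auto
  moreover have "finite ((\<lambda>(u, w). {u, w}) ` (V \<times> V))"
    using assms by (simp add: simple_graph_def)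
  ultimately show ?thesis
    by (rule finite_subset)
qed

lemma card_edges_delete_le:
  assumes sg: "simple_graph V E" and deg: "\<forall>x. card {y. E x y} \<le> D" and "finite S"
  shows "card (edges E) \<le> card (edges (\<lambda>u w. E u w \<and> u \<notin> S \<and> w \<notin> S)) + card S * D"
proof -
  let ?E' = "\<lambda>u w. E u w \<and> u \<notin> S \<and> w \<notin> S"
  let ?U = "\<Union>s\<in>S. (\<lambda>z. {s, z}) ` {z. E s z}"
  have "edges E \<subseteq> edges ?E' \<union> ?U"
  proof
    fix e assume "e \<in> edges E"
    then obtain u w where e: "e = {u, w}" "E u w"
      unfolding edges_def by blast
    then have "E w u"
      using sg unfolding simple_graph_def by blast
    then show "e \<in> edges ?E' \<union> ?U"
      using e unfolding edges_def by (cases "u \<in> S"; cases "w \<in> S") (auto simp: insert_commute)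
  qed
  moreover have "finite (edges ?E')"
    using finite_edges[of V ?E'] sg unfolding simple_graph_def by auto
  moreover have "finite ?U"
    using \<open>finite S\<close> finite_nbhd[OF sg] by blast
  ultimately have "card (edges E) \<le> card (edges ?E') + card ?U"
    by (meson card_Un_le card_mono finite_UnI order_trans)
  also have "card ?U \<le> (\<Sum>s\<in>S. card ((\<lambda>z. {s, z}) ` {z. E s z}))"
    by (rule card_UN_le[OF \<open>finite S\<close>])
  also have "\<dots> \<le> (\<Sum>s\<in>S. D)"
    by (rule sum_mono) (use deg card_image_le[OF finite_nbhd[OF sg]] le_trans in blast)
  finally show ?thesis
    by simp
qed

text \<open>No distinctness conditions are needed: they follow from the adjacency pattern.\<close>
definition induced_matching :: "('a \<Rightarrow> 'a \<Rightarrow> bool) \<Rightarrow> (nat \<Rightarrow> 'a) \<Rightarrow> (nat \<Rightarrow> 'a) \<Rightarrow> nat \<Rightarrow> bool" where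
  "induced_matching E a b k \<longleftrightarrow>
     (\<forall>i<k. \<forall>j<k. (E (a i) (b j) \<longleftrightarrow> i = j) \<and> \<not> E (a i) (a j) \<and> \<not> E (b i) (b j))"

text \<open>Greedy: take an edge xy, delete both neighbourhoods, which costs at most 2 D^2 edges,
  and recurse.\<close>
lemma induced_matching_exists:
  assumes "simple_graph V E" "\<forall>x. card {y. E x y} \<le> D" "k * (2 * D * D) < card (edges E)"
  shows "\<exists>a b. induced_matching E a b k"
  using assms
proof (induction k arbitrary: E)
  case 0
  then show ?case
    unfolding induced_matching_def by simp
next
  case (Suc k)
  note sg = Suc.prems(1) and deg = Suc.prems(2)
  have sym: "\<And>u w. E u w \<Longrightarrow> E w u" and irr: "\<And>u. \<not> E u u"
    using sg unfolding simple_graph_def by blast+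
  have "edges E \<noteq> {}"
    using Suc.prems(3) by auto
  then obtain x y where xy: "E x y"
    unfolding edges_def by blast
  define S where "S = {z. E x z} \<union> {z. E y z}"
  define E' where "E' = (\<lambda>u w. E u w \<and> u \<notin> S \<and> w \<notin> S)"
  have fin_S: "finite S" and card_S: "card S \<le> 2 * D"
  proof -
    show "finite S"
      unfolding S_def using finite_nbhd[OF sg] by simp
    have "card S \<le> card {z. E x z} + card {z. E y z}"
      unfolding S_def by (rule card_Un_le)
    then show "card S \<le> 2 * D"
      using deg[rule_format, of x] deg[rule_format, of y] by linarith
  qed
  have sg': "simple_graph V E'"
    using sg unfolding simple_graph_def E'_def by auto
  have deg': "\<forall>u. card {w. E' u w} \<le> D"
  proof
    fix u
    have "{w. E' u w} \<subseteq> {w. E u w}"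
      unfolding E'_def by blast
    then show "card {w. E' u w} \<le> D"
      using card_mono[OF finite_nbhd[OF sg]] deg le_trans by blast
  qed
  have "card S * D \<le> 2 * D * D"
    using mult_right_mono[OF card_S] by simp
  then have "card (edges E) \<le> card (edges E') + 2 * D * D"
    using card_edges_delete_le[OF sg deg fin_S] unfolding E'_def by linarith
  moreover have "Suc k * (2 * D * D) = 2 * D * D + k * (2 * D * D)"
    by simp
  ultimately have "k * (2 * D * D) < card (edges E')"
    using Suc.prems(3) by linarith
  then obtain a b where ab: "induced_matching E' a b k"
    using Suc.IH[OF sg' deg'] by blast
  then have outside: "a i \<notin> S" "b i \<notin> S" if "i < k" for i
    using that unfolding induced_matching_def E'_def by blast+
  have "E u w = E' u w" if "u \<notin> S" "w \<notin> S" for u w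
    using that unfolding E'_def by simp
  then have old: "\<forall>i<k. \<forall>j<k. (E (a i) (b j) \<longleftrightarrow> i = j) \<and> \<not> E (a i) (a j) \<and> \<not> E (b i) (b j)"
    using ab outside unfolding induced_matching_def by simp
  have new: "\<not> E x z \<and> \<not> E y z \<and> \<not> E z x \<and> \<not> E z y" if "z \<notin> S" for z
    using that sym unfolding S_def by blast
  have "induced_matching E (a(k := x)) (b(k := y)) (Suc k)"
    unfolding induced_matching_def
  proof (intro allI impI)
    fix i j assume "i < Suc k" "j < Suc k"
    then consider "i < k" "j < k" | "i = k" "j < k" | "i < k" "j = k" | "i = k" "j = k"
      by linarith
    then show "(E ((a(k := x)) i) ((b(k := y)) j) \<longleftrightarrow> i = j) \<and> \<not> E ((a(k := x)) i) ((a(k := x)) j)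
        \<and> \<not> E ((b(k := y)) i) ((b(k := y)) j)"
    proof cases
      case 1
      then show ?thesis
        using old by simp
    next
      case 2
      then show ?thesis
        using new[OF outside(1)] new[OF outside(2)] by simp
    next
      case 3
      then show ?thesis
        using new[OF outside(1)] new[OF outside(2)] by simp
    next
      case 4
      then show ?thesis
        using xy irr by simp
    qed
  qed
  then show ?case
    by blast
qed

lemma inj_on_if_private_neighbour:
  assumes adj: "\<forall>i\<in>A. \<forall>j\<in>A. E (g i) (g j) \<longleftrightarrow> G i j"
    and unique: "\<forall>i\<in>A. \<exists>m\<in>A. G i m \<and> (\<forall>j\<in>A. G j m \<longrightarrow> j = i)"
  shows "inj_on g A"
proof (rule inj_onI)
  fix i j assume ij: "i \<in> A" "j \<in> A" "g i = g j"
  then obtain m where m: "m \<in> A" "G i m" "\<forall>j\<in>A. G j m \<longrightarrow> j = i"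
    using unique by blast
  then have "G j m"
    using adj ij by metis
  then show "i = j"
    using m ij by blast
qed

lemma has_vm_matching_if_induced_matching:
  assumes sg: "simple_graph V E" and match: "induced_matching E a b n"
  shows "has_vm_iso V E (matching_verts n) (matching_adj n)"
proof -
  have sym: "\<And>u w. E u w \<Longrightarrow> E w u"
    using sg unfolding simple_graph_def by blast
  define g where "g i = (if i < n then a i else b (i - n))" for i
  have adj: "\<forall>i\<in>{0..<2 * n}. \<forall>j\<in>{0..<2 * n}. E (g i) (g j) \<longleftrightarrow> matching_adj n i j"
  proof (intro ballI)
    fix i j assume "i \<in> {0..<2 * n}" "j \<in> {0..<2 * n}"
    then have ij: "i < 2 * n" "j < 2 * n"
      by auto
    consider "i < n" "j < n" | "i < n" "n \<le> j" | "n \<le> i" "j < n" | "n \<le> i" "n \<le> j"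
      by linarith
    then show "E (g i) (g j) \<longleftrightarrow> matching_adj n i j"
    proof cases
      case 1
      then show ?thesis
        using match unfolding induced_matching_def g_def matching_adj_def by simp
    next
      case 2
      then show ?thesis
        using match ij unfolding induced_matching_def g_def matching_adj_def by auto
    next
      case 3
      then have "E (g i) (g j) \<longleftrightarrow> E (a j) (b (i - n))"
        unfolding g_def using sym by auto
      then show ?thesis
        using match ij 3 unfolding induced_matching_def matching_adj_def by auto
    next
      case 4
      then show ?thesis
        using match ij unfolding induced_matching_def g_def matching_adj_def by auto
    qed
  qed
  have unique: "\<forall>i\<in>{0..<2 * n}. \<exists>m\<in>{0..<2 * n}. matching_adj n i m \<and>
      (\<forall>j\<in>{0..<2 * n}. matching_adj n j m \<longrightarrow> j = i)"
  proof
    fix i assume "i \<in> {0..<2 * n}"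
    then show "\<exists>m\<in>{0..<2 * n}. matching_adj n i m \<and> (\<forall>j\<in>{0..<2 * n}. matching_adj n j m \<longrightarrow> j = i)"
      by (intro bexI[of _ "if i < n then i + n else i - n"]) (auto simp: matching_adj_def)
  qed
  have "g ` {0..<2 * n} \<subseteq> V"
  proof
    fix z assume "z \<in> g ` {0..<2 * n}"
    then obtain i m where "z = g i" "E (g i) (g m)"
      using adj unique by (metis imageE)
    then show "z \<in> V"
      using sg unfolding simple_graph_def by blast
  qed
  then show ?thesis
    unfolding matching_verts_def
    using has_vm_isoI[OF lc_refl inj_on_if_private_neighbour[of "{0..<2 * n}" E g, OF adj unique] _ adj] by blast
qed

lemma has_vm_complete_or_matching_if_many_edges:
  assumes sg: "simple_graph V E" and many: "n * (2 * 2 ^ (n + n) * 2 ^ (n + n)) < card (edges E)"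
  shows "has_vm_iso V E {0..<n} (complete_adj n) \<or> has_vm_iso V E (matching_verts n) (matching_adj n)"
  using low_degree_or_has_vm_complete[OF sg, of n]
proof
  assume "\<forall>x. card {y. E x y} < 2 ^ (n + n)"
  then have "\<forall>x. card {y. E x y} \<le> 2 ^ (n + n)"
    using less_imp_le by blast
  then obtain a b where "induced_matching E a b n"
    using induced_matching_exists[OF sg _ many] by blast
  then show ?thesis
    using has_vm_matching_if_induced_matching[OF sg] by blast
qed simp

theorem theorem3p1:
  shows "(\<forall>n. \<exists>N. \<forall>(V::nat set) E. simple_graph V E \<and> card V \<ge> N \<longrightarrow>
            has_vm_iso V E (edgeless_verts n) edgeless_adj)
       \<and> (\<forall>n. \<exists>N. \<forall>(V::nat set) E. simple_graph V E \<and> graph_connected V E \<and> card V \<ge> N \<longrightarrow>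
            has_vm_iso V E {0..<n} (complete_adj n))
       \<and> (\<forall>n. \<exists>N. \<forall>(V::nat set) E. simple_graph V E \<and> card (edges E) \<ge> N \<longrightarrow>
            has_vm_iso V E {0..<n} (complete_adj n) \<or> has_vm_iso V E (matching_verts n) (matching_adj n))"
proof (intro conjI allI)
  fix n :: nat
  show "\<exists>N. \<forall>(V::nat set) E. simple_graph V E \<and> card V \<ge> N \<longrightarrow>
      has_vm_iso V E (edgeless_verts n) edgeless_adj"
    using has_vm_edgeless_if_large by blast
  show "\<exists>N. \<forall>(V::nat set) E. simple_graph V E \<and> graph_connected V E \<and> card V \<ge> N \<longrightarrow>
      has_vm_iso V E {0..<n} (complete_adj n)"
    using has_vm_complete_if_connected_large Suc_le_eq by blast
  show "\<exists>N. \<forall>(V::nat set) E. simple_graph V E \<and> card (edges E) \<ge> N \<longrightarrow>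
      has_vm_iso V E {0..<n} (complete_adj n) \<or> has_vm_iso V E (matching_verts n) (matching_adj n)"
    using has_vm_complete_or_matching_if_many_edges Suc_le_eq by blast
qed

end
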